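(* Consider the modified GSEMO on \textsc{LOTZ} with a parent selection mechanism such that, in every iteration in which the population does not cover the whole Pareto front (after the Pareto front has been reached), the probability of selecting a good individual is at least $p_{\mathrm{good}}$. Then the expected time for the modified GSEMO to reach a population covering the whole Pareto front of \textsc{LOTZ} is $O(n^2/p_{\mathrm{good}})$.
   Context: Search space $\{0,1\}^n$; objectives maximised. $\textsc{LOTZ}(x)=(\mathrm{LO}(x),\mathrm{TZ}(x))$, $\mathrm{LO}$ = number of leading ones, $\mathrm{TZ}$ = number of trailing zeros. Dominance: $y$ dominates $x$ if $f_i(y)\ge f_i(x)$ for all $i$, strictly for some $i$; weakly dominates if $\ge$ in all. Pareto set $X^*=\{1^i0^{n-i}:0\le i\le n\}$, front $F^*=f(X^* )$. Modified GSEMO: let $\mathrm{L}(x)=\mathrm{LO}(x)+\mathrm{TZ}(x)$. Start with uniform random $s$, $P=\{s\}$. Each iteration: let $P'\subseteq P$ be the points with maximum $\mathrm{L}$-value; compute diversity scores w.r.t. $P'$ and choose a parent $s\in P'$ by the parent selection mechanism; create $s'$ by flipping each bit independently with probability $1/n$; if $s'$ is not dominated by any member of $P$, add it and remove all members of $P$ weakly dominated by $s'$. Time = number of iterations until $f(P)=F^*$. Good: w.r.t. a population $P$, $x\in P\cap X^*$ is good if some Hamming neighbour $y$ of $x$ satisfies $y\in X^*$ and $f(y)\notin f(P)$. *)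

theory Defs
  imports "HOL-Probability.Probability"
begin

text \<open>Bit strings of length n are represented as bool lists (True = 1).\<close>

definition LO :: "bool list \<Rightarrow> nat" where
  "LO x = length (takeWhile (\<lambda>b. b) x)"

definition TZ :: "bool list \<Rightarrow> nat" where
  "TZ x = length (takeWhile (\<lambda>b. \<not> b) (rev x))"

definition lotz :: "bool list \<Rightarrow> nat \<times> nat" where
  "lotz x = (LO x, TZ x)"

definition Lval :: "bool list \<Rightarrow> nat" where
  "Lval x = LO x + TZ x"

definition weakly_dominates :: "bool list \<Rightarrow> bool list \<Rightarrow> bool" where
  "weakly_dominates y x \<longleftrightarrow> LO y \<ge> LO x \<and> TZ y \<ge> TZ x"

definition dominates :: "bool list \<Rightarrow> bool list \<Rightarrow> bool" where
  "dominates y x \<longleftrightarrow> weakly_dominates y x \<and> (LO y > LO x \<or> TZ y > TZ x)"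

definition pareto_set :: "nat \<Rightarrow> bool list set" where
  "pareto_set n = {replicate i True @ replicate (n - i) False | i. i \<le> n}"

definition pareto_front :: "nat \<Rightarrow> (nat \<times> nat) set" where
  "pareto_front n = lotz ` pareto_set n"

definition hamming_neighbour :: "bool list \<Rightarrow> bool list \<Rightarrow> bool" where
  "hamming_neighbour x y \<longleftrightarrow> length x = length y \<and>
     card {i. i < length x \<and> x ! i \<noteq> y ! i} = 1"

definition good :: "nat \<Rightarrow> bool list set \<Rightarrow> bool list \<Rightarrow> bool" where
  "good n P x \<longleftrightarrow> x \<in> P \<inter> pareto_set n \<and>
     (\<exists>y. hamming_neighbour x y \<and> y \<in> pareto_set n \<and> lotz y \<notin> lotz ` P)"

definition maxL :: "bool list set \<Rightarrow> bool list set" where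
  "maxL P = {x \<in> P. Lval x = Max (Lval ` P)}"

primrec flip_bits :: "real \<Rightarrow> bool list \<Rightarrow> bool list pmf" where
  "flip_bits q [] = return_pmf []"
| "flip_bits q (b # bs) =
     bind_pmf (bernoulli_pmf q) (\<lambda>c. map_pmf (\<lambda>r. (if c then \<not> b else b) # r) (flip_bits q bs))"

definition gsemo_step :: "nat \<Rightarrow> (bool list set \<Rightarrow> bool list pmf) \<Rightarrow> bool list set \<Rightarrow> bool list set pmf" where
  "gsemo_step n sel P =
     bind_pmf (sel (maxL P)) (\<lambda>s.
     map_pmf (\<lambda>s'. if (\<exists>z\<in>P. dominates z s') then P
                    else insert s' {z \<in> P. \<not> weakly_dominates s' z})
       (flip_bits (1 / real n) s))"

definition covered :: "nat \<Rightarrow> bool list set \<Rightarrow> bool" where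
  "covered n P \<longleftrightarrow> lotz ` P = pareto_front n"

definition stopped_step :: "nat \<Rightarrow> (bool list set \<Rightarrow> bool list pmf) \<Rightarrow> bool list set \<Rightarrow> bool list set pmf" where
  "stopped_step n sel P = (if covered n P then return_pmf P else gsemo_step n sel P)"

primrec pop_dist :: "nat \<Rightarrow> (bool list set \<Rightarrow> bool list pmf) \<Rightarrow> nat \<Rightarrow> bool list set pmf" where
  "pop_dist n sel 0 = map_pmf (\<lambda>s. {s}) (pmf_of_set {xs. length xs = n})"
| "pop_dist n sel (Suc t) = bind_pmf (pop_dist n sel t) (stopped_step n sel)"

text \<open>Expected time T = sum over t of Pr[T > t].\<close>
definition expected_time :: "nat \<Rightarrow> (bool list set \<Rightarrow> bool list pmf) \<Rightarrow> ennreal" where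
  "expected_time n sel = (\<Sum>t. ennreal (measure_pmf.prob (pop_dist n sel t) {P. \<not> covered n P}))"

definition valid_pop :: "nat \<Rightarrow> bool list set \<Rightarrow> bool" where
  "valid_pop n P \<longleftrightarrow> finite P \<and> P \<noteq> {} \<and> (\<forall>x\<in>P. length x = n) \<and>
     (\<forall>x\<in>P. \<forall>y\<in>P. x \<noteq> y \<longrightarrow> \<not> weakly_dominates x y)"

end

theory Submission
  imports Defs
begin

(* Additive drift on the potential
     e^2 n ((n - max L) + (n + 1 - |P \<inter> X*|) / p),   set to 0 once the front is covered.
   Both gaps never increase: accepted points are undominated and weakly dominate whatever they
   replace. While P contains no Pareto-optimal point, flipping the first 0 of a parent of
   maximal L gives an accepted child of larger L; afterwards a good parent, chosen with
   probability at least p, has a Pareto-optimal neighbour with a new objective vector. A fixed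
   neighbour is produced with probability at least 1/(e^2 n), so the potential drops by at
   least 1 in expectation per iteration, and the expected time is at most its initial value,
   which is below 3 e^2 n^2 / p. *)

lemma of_nat_add_indicator_le:
  "(f x :: nat) \<le> c \<Longrightarrow> real (f x) + indicator {y. f y < c} x \<le> real c"
  by (auto simp: indicator_def)

lemma exp_minus_two_le_power:
  assumes "2 \<le> n"
  shows "exp (-2) \<le> (1 - 1 / real n) ^ (n - 1)"
proof -
  have pos: "0 < 1 - 1 / real n" using assms by (simp add: field_simps)
  have "- (1 / real n) - 2 * (1 / real n)\<^sup>2 \<le> ln (1 - 1 / real n)"
    using assms by (intro ln_one_minus_pos_lower_bound) (auto simp: field_simps)
  hence "real n * (- (1 / real n) - 2 * (1 / real n)\<^sup>2) \<le> real n * ln (1 - 1 / real n)"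
    by (rule mult_left_mono) simp
  moreover have "real n * (- (1 / real n) - 2 * (1 / real n)\<^sup>2) = -1 - 2 / real n"
    using assms by (simp add: field_simps power2_eq_square)
  moreover have "2 / real n \<le> 1" using assms by (simp add: field_simps)
  ultimately have "exp (-2) \<le> exp (real n * ln (1 - 1 / real n))" by simp
  also have "\<dots> = (1 - 1 / real n) ^ n" using pos by (simp add: ln_realpow[symmetric])
  also have "\<dots> \<le> (1 - 1 / real n) ^ (n - 1)"
    using pos assms by (intro power_decreasing) auto
  finally show ?thesis .
qed

lemma nn_integral_drift_le:
  fixes M :: "'a pmf" and f :: "'a \<Rightarrow> real"
  assumes f: "\<And>x. 0 \<le> f x" and g: "0 < g"
    and decrease: "\<And>x. x \<in> set_pmf M \<Longrightarrow> f x + g * indicator E x \<le> a"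
    and progress: "ennreal (1 / g) \<le> emeasure M E"
  shows "1 + (\<integral>\<^sup>+x. ennreal (f x) \<partial>M) \<le> ennreal a"
proof -
  have "1 = ennreal g * ennreal (1 / g)" using g by (simp add: ennreal_mult''[symmetric])
  also have "\<dots> \<le> ennreal g * emeasure M E" using progress by (rule mult_left_mono) simp
  finally have "1 + (\<integral>\<^sup>+x. ennreal (f x) \<partial>M)
      \<le> ennreal g * emeasure M E + (\<integral>\<^sup>+x. ennreal (f x) \<partial>M)"
    by (rule add_right_mono)
  also have "\<dots> = (\<integral>\<^sup>+x. ennreal g * indicator E x + ennreal (f x) \<partial>M)"
    by (simp add: nn_integral_add nn_integral_cmult_indicator)
  also have "\<dots> = (\<integral>\<^sup>+x. ennreal (f x + g * indicator E x) \<partial>M)"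
    using f g by (intro nn_integral_cong) (simp add: indicator_def ennreal_plus add.commute)
  also have "\<dots> \<le> (\<integral>\<^sup>+x. ennreal a \<partial>M)"
    using decrease by (intro nn_integral_mono_AE) (simp add: AE_measure_pmf_iff ennreal_leI)
  finally show ?thesis by simp
qed

lemma suminf_emeasure_le_potential:
  fixes D :: "nat \<Rightarrow> 'a pmf" and K :: "'a \<Rightarrow> 'a pmf" and h :: "'a \<Rightarrow> ennreal"
  assumes D_Suc: "\<And>t. D (Suc t) = D t \<bind> K"
    and drift: "\<And>t x. x \<in> set_pmf (D t) \<Longrightarrow> indicator A x + (\<integral>\<^sup>+y. h y \<partial>K x) \<le> h x"
  shows "(\<Sum>t. emeasure (D t) A) \<le> (\<integral>\<^sup>+x. h x \<partial>D 0)"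
proof -
  have step: "emeasure (D t) A + (\<integral>\<^sup>+x. h x \<partial>D (Suc t)) \<le> (\<integral>\<^sup>+x. h x \<partial>D t)" for t
  proof -
    have "emeasure (D t) A + (\<integral>\<^sup>+x. h x \<partial>D (Suc t))
        = (\<integral>\<^sup>+x. indicator A x + (\<integral>\<^sup>+y. h y \<partial>K x) \<partial>D t)"
      by (simp add: D_Suc nn_integral_bind_pmf nn_integral_add)
    also have "\<dots> \<le> (\<integral>\<^sup>+x. h x \<partial>D t)"
      using drift by (intro nn_integral_mono_AE) (simp add: AE_measure_pmf_iff)
    finally show ?thesis .
  qed
  have bound: "(\<Sum>s<t. emeasure (D s) A) + (\<integral>\<^sup>+x. h x \<partial>D t) \<le> (\<integral>\<^sup>+x. h x \<partial>D 0)" for t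
  proof (induction t)
    case (Suc t)
    have "(\<Sum>s<Suc t. emeasure (D s) A) + (\<integral>\<^sup>+x. h x \<partial>D (Suc t))
        \<le> (\<Sum>s<t. emeasure (D s) A) + (\<integral>\<^sup>+x. h x \<partial>D t)"
      using step[of t] by (simp add: add.assoc add_left_mono)
    thus ?case using Suc.IH by (rule order_trans)
  qed simp
  have "(\<Sum>s<t. emeasure (D s) A) \<le> (\<integral>\<^sup>+x. h x \<partial>D 0)" for t
    using bound[of t] by (rule order_trans[rotated]) simp
  thus ?thesis by (intro suminf_le_const summableI)
qed

lemma LO_le_length: "LO x \<le> length x"
  unfolding LO_def by (rule length_takeWhile_le)

lemma nth_less_LO: "i < LO x \<Longrightarrow> x ! i"
  unfolding LO_def by (metis nth_mem set_takeWhileD takeWhile_nth)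

lemma not_nth_LO: "LO x < length x \<Longrightarrow> \<not> x ! LO x"
  unfolding LO_def by (rule nth_length_takeWhile)

lemma LO_geI: "(\<And>i. i < k \<Longrightarrow> x ! i) \<Longrightarrow> k \<le> length x \<Longrightarrow> k \<le> LO x"
  unfolding LO_def by (rule length_takeWhile_less_P_nth)

lemma TZ_eq_LO_rev: "TZ x = LO (map Not (rev x))"
  unfolding TZ_def LO_def by (simp add: takeWhile_map o_def)

lemma TZ_le_length: "TZ x \<le> length x"
  using LO_le_length[of "map Not (rev x)"] by (simp add: TZ_eq_LO_rev)

lemma not_nth_less_TZ: "i < TZ x \<Longrightarrow> \<not> x ! (length x - Suc i)"
  using nth_less_LO[of i "map Not (rev x)"] LO_le_length[of "map Not (rev x)"]
  by (simp add: TZ_eq_LO_rev rev_nth)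

lemma TZ_geI:
  "(\<And>i. i < k \<Longrightarrow> \<not> x ! (length x - Suc i)) \<Longrightarrow> k \<le> length x \<Longrightarrow> k \<le> TZ x"
  unfolding TZ_eq_LO_rev by (rule LO_geI) (auto simp: rev_nth)

lemma LO_replicate_append: "LO (replicate i True @ replicate j False) = i"
  unfolding LO_def by (induction i) (cases j, auto)

lemma TZ_replicate_append: "TZ (replicate i True @ replicate j False) = j"
  by (simp add: TZ_eq_LO_rev LO_replicate_append)

lemma Lval_le_length: "Lval x \<le> length x"
proof (rule ccontr)
  assume "\<not> Lval x \<le> length x"
  hence overlap: "length x - TZ x < LO x" "0 < TZ x"
    using LO_le_length[of x] TZ_le_length[of x] by (auto simp: Lval_def)
  have "x ! (length x - TZ x)"
    using nth_less_LO[OF overlap(1)] .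
  moreover have "\<not> x ! (length x - Suc (TZ x - 1))"
    using not_nth_less_TZ[of "TZ x - 1" x] overlap(2) by simp
  ultimately show False using overlap(2) by simp
qed

lemma pareto_point_eq:
  assumes "Lval x = length x"
  shows "x = replicate (LO x) True @ replicate (length x - LO x) False"
proof (rule nth_equalityI)
  fix i assume i: "i < length x"
  show "x ! i = (replicate (LO x) True @ replicate (length x - LO x) False) ! i"
  proof (cases "i < LO x")
    case True thus ?thesis using nth_less_LO by (simp add: nth_append)
  next
    case False
    hence "length x - Suc i < TZ x" using assms i by (simp add: Lval_def)
    hence "\<not> x ! i" using not_nth_less_TZ[of "length x - Suc i" x] i by (simp add: Suc_diff_Suc)
    thus ?thesis using False i by (simp add: nth_append)
  qed
qed (use LO_le_length[of x] in simp)

lemma pareto_set_iff: "x \<in> pareto_set n \<longleftrightarrow> length x = n \<and> Lval x = n"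
proof
  assume "x \<in> pareto_set n"
  then obtain i where "i \<le> n" "x = replicate i True @ replicate (n - i) False"
    unfolding pareto_set_def by blast
  thus "length x = n \<and> Lval x = n" by (simp add: Lval_def LO_replicate_append TZ_replicate_append)
next
  assume "length x = n \<and> Lval x = n"
  thus "x \<in> pareto_set n"
    using pareto_point_eq[of x] LO_le_length[of x] unfolding pareto_set_def by auto
qed

lemma weakly_dominates_pareto_point:
  assumes "length s = n" "z \<in> pareto_set n" "weakly_dominates s z"
  shows "s = z"
proof -
  have "LO s = LO z" "Lval s = n"
    using assms Lval_le_length[of s] unfolding pareto_set_iff weakly_dominates_def Lval_def
    by linarith+
  thus ?thesis using assms pareto_point_eq unfolding pareto_set_iff by metis
qed

lemma not_dominates_pareto_point:
  assumes "length z = n" "y \<in> pareto_set n"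
  shows "\<not> dominates z y"
  using assms Lval_le_length[of z]
  unfolding pareto_set_iff dominates_def weakly_dominates_def Lval_def by linarith

lemma pareto_set_eq_image:
  "pareto_set n = (\<lambda>i. replicate i True @ replicate (n - i) False) ` {..n}"
  unfolding pareto_set_def by auto

lemma finite_pareto_set: "finite (pareto_set n)"
  unfolding pareto_set_eq_image by simp

lemma card_pareto_set_le: "card (pareto_set n) \<le> n + 1"
  unfolding pareto_set_eq_image using card_image_le[of "{..n}"] by fastforce

definition hamming_dist :: "bool list \<Rightarrow> bool list \<Rightarrow> nat" where
  "hamming_dist x y = card {i. i < length x \<and> x ! i \<noteq> y ! i}"

lemma hamming_dist_le_length: "hamming_dist x y \<le> length x"
  unfolding hamming_dist_def by (rule order.trans[OF card_mono[of "{..<length x}"]]) auto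

lemma hamming_dist_Cons:
  "hamming_dist (a # x) (b # y) = (if a = b then 0 else 1) + hamming_dist x y"
proof -
  have "{i. i < length (a # x) \<and> (a # x) ! i \<noteq> (b # y) ! i} =
      (if a = b then {} else {0}) \<union> Suc ` {i. i < length x \<and> x ! i \<noteq> y ! i}"
    by (auto simp: image_iff less_Suc_eq_0_disj)
  thus ?thesis unfolding hamming_dist_def by (simp add: card_image)
qed

lemma length_flip_bits: "y \<in> set_pmf (flip_bits q x) \<Longrightarrow> length y = length x"
  by (induction x arbitrary: y) auto

lemma pmf_flip_bits:
  assumes "0 \<le> q" "q \<le> 1" "length y = length x"
  shows "pmf (flip_bits q x) y = q ^ hamming_dist x y * (1 - q) ^ (length x - hamming_dist x y)"
  using assms(3)
proof (induction x arbitrary: y)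
  case Nil thus ?case by (simp add: hamming_dist_def)
next
  case (Cons a x)
  then obtain b ys where y: "y = b # ys" and len: "length ys = length x" by (cases y) auto
  have "pmf (map_pmf ((#) c) (flip_bits q x)) (b # ys) = (if c = b then pmf (flip_bits q x) ys else 0)" for c
    by (auto simp: pmf_map_inj' pmf_eq_0_set_pmf)
  hence "pmf (flip_bits q (a # x)) y = (if a = b then 1 - q else q) * pmf (flip_bits q x) ys"
    using assms(1,2) by (auto simp: y pmf_bind)
  thus ?case
    using Cons.IH[OF len] hamming_dist_le_length[of x ys]
    by (simp add: y hamming_dist_Cons Suc_diff_le)
qed

lemma pmf_flip_bits_neighbour_ge:
  assumes "2 \<le> n" "length x = n" "hamming_neighbour x y"
  shows "exp (-2) / real n \<le> pmf (flip_bits (1 / real n) x) y"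
proof -
  have "pmf (flip_bits (1 / real n) x) y = 1 / real n * (1 - 1 / real n) ^ (n - 1)"
    using assms pmf_flip_bits[of "1 / real n" y x]
    unfolding hamming_neighbour_def hamming_dist_def by auto
  thus ?thesis
    using mult_left_mono[OF exp_minus_two_le_power[OF assms(1)], of "1 / real n"] by simp
qed

definition gsemo_update :: "bool list set \<Rightarrow> bool list \<Rightarrow> bool list set" where
  "gsemo_update P s' =
     (if \<exists>z\<in>P. dominates z s' then P else insert s' {z \<in> P. \<not> weakly_dominates s' z})"

lemma gsemo_step_eq:
  "gsemo_step n sel P = sel (maxL P) \<bind> (\<lambda>s. map_pmf (gsemo_update P) (flip_bits (1 / real n) s))"
  unfolding gsemo_step_def gsemo_update_def by simp

lemma weakly_dominates_refl: "weakly_dominates x x"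
  unfolding weakly_dominates_def by simp

lemma weakly_dominates_Lval_le: "weakly_dominates x y \<Longrightarrow> Lval y \<le> Lval x"
  unfolding weakly_dominates_def Lval_def by simp

lemma gsemo_update_weakly_dominates:
  assumes "z \<in> P"
  shows "\<exists>z'\<in>gsemo_update P s'. weakly_dominates z' z"
  using assms weakly_dominates_refl unfolding gsemo_update_def by auto

lemma valid_pop_gsemo_update:
  assumes P: "valid_pop n P" and s': "length s' = n"
  shows "valid_pop n (gsemo_update P s')"
proof (cases "\<exists>z\<in>P. dominates z s'")
  case False
  have "\<not> weakly_dominates z s'" if "z \<in> P" "\<not> weakly_dominates s' z" for z
    using False that unfolding dominates_def weakly_dominates_def by auto
  thus ?thesis using P s' False unfolding valid_pop_def gsemo_update_def by auto
qed (use P in \<open>simp add: gsemo_update_def\<close>)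

lemma pareto_points_subset_gsemo_update:
  assumes "valid_pop n P" "length s' = n"
  shows "P \<inter> pareto_set n \<subseteq> gsemo_update P s'"
proof
  fix z assume z: "z \<in> P \<inter> pareto_set n"
  then obtain z' where z': "z' \<in> gsemo_update P s'" "weakly_dominates z' z"
    using gsemo_update_weakly_dominates by blast
  have "length z' = n"
    using valid_pop_gsemo_update[OF assms] z'(1) unfolding valid_pop_def by blast
  thus "z \<in> gsemo_update P s'"
    using weakly_dominates_pareto_point z z' by blast
qed

lemma Max_Lval_le_gsemo_update:
  assumes "valid_pop n P" "length s' = n"
  shows "Max (Lval ` P) \<le> Max (Lval ` gsemo_update P s')"
proof -
  have fin: "finite (gsemo_update P s')"
    using valid_pop_gsemo_update[OF assms] unfolding valid_pop_def by blast
  have "Lval z \<le> Max (Lval ` gsemo_update P s')" if "z \<in> P" for z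
  proof -
    obtain z' where "z' \<in> gsemo_update P s'" "weakly_dominates z' z"
      using gsemo_update_weakly_dominates[OF \<open>z \<in> P\<close>] by blast
    thus ?thesis using fin weakly_dominates_Lval_le Max_ge le_trans by blast
  qed
  thus ?thesis using assms(1) unfolding valid_pop_def by simp
qed

definition L_gap :: "nat \<Rightarrow> bool list set \<Rightarrow> nat" where
  "L_gap n P = n - Max (Lval ` P)"

definition front_gap :: "nat \<Rightarrow> bool list set \<Rightarrow> nat" where
  "front_gap n P = n + 1 - card (P \<inter> pareto_set n)"

lemma card_pareto_points_le: "card (P \<inter> pareto_set n) \<le> n + 1"
  using card_mono[OF finite_pareto_set Int_lower2] card_pareto_set_le le_trans by blast

lemma gaps_gsemo_update_le:
  assumes "valid_pop n P" "length s' = n"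
  shows "L_gap n (gsemo_update P s') \<le> L_gap n P \<and> front_gap n (gsemo_update P s') \<le> front_gap n P"
proof -
  have "card (P \<inter> pareto_set n) \<le> card (gsemo_update P s' \<inter> pareto_set n)"
    using pareto_points_subset_gsemo_update[OF assms] finite_pareto_set
    by (intro card_mono) auto
  thus ?thesis
    using Max_Lval_le_gsemo_update[OF assms] unfolding L_gap_def front_gap_def
    by (simp add: diff_le_mono2)
qed

lemma flip_first_zero:
  assumes "Lval s < length s"
  defines "y \<equiv> s[LO s := True]"
  shows "hamming_neighbour s y" "dominates y s" "Lval s < Lval y"
proof -
  have lt: "LO s < length s" "LO s + TZ s < length s" using assms(1) by (auto simp: Lval_def)
  have "{i. i < length s \<and> s ! i \<noteq> y ! i} = {LO s}"
    using lt not_nth_LO[of s] unfolding y_def by (auto simp: nth_list_update)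
  thus "hamming_neighbour s y" unfolding hamming_neighbour_def y_def by simp
  have LO: "LO s < LO y"
    using lt nth_less_LO[of _ s]
    by (intro Suc_le_lessD LO_geI) (auto simp: y_def nth_list_update less_Suc_eq)
  have TZ: "TZ s \<le> TZ y"
  proof (rule TZ_geI)
    fix i assume "i < TZ s"
    moreover from this have "length s - Suc i \<noteq> LO s" using lt(2) by linarith
    ultimately show "\<not> y ! (length y - Suc i)" using not_nth_less_TZ by (simp add: y_def)
  qed (use TZ_le_length[of s] in \<open>simp add: y_def\<close>)
  from LO TZ show "dominates y s" "Lval s < Lval y"
    unfolding dominates_def weakly_dominates_def Lval_def by auto
qed

lemma L_gap_progress:
  assumes P: "valid_pop n P" "P \<inter> pareto_set n = {}" and s: "s \<in> maxL P"
  shows "\<exists>y. hamming_neighbour s y \<and> L_gap n (gsemo_update P y) < L_gap n P"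
proof -
  have sP: "s \<in> P" "Lval s = Max (Lval ` P)" "length s = n"
    using s P(1) unfolding maxL_def valid_pop_def by auto
  hence "Lval s < length s"
    using P(2) Lval_le_length[of s] pareto_set_iff[of s n] by (metis IntI empty_iff le_neq_implies_less)
  then obtain y where y: "hamming_neighbour s y" "dominates y s" "Lval s < Lval y"
    using flip_first_zero by blast
  have len: "length y = n" using y(1) sP(3) unfolding hamming_neighbour_def by simp
  have "\<not> dominates z y" if "z \<in> P" for z
  proof
    assume "dominates z y"
    hence "dominates z s" using y(2) unfolding dominates_def weakly_dominates_def by auto
    moreover from this have "z \<noteq> s" unfolding dominates_def by auto
    ultimately show False using P(1) that sP(1) unfolding valid_pop_def dominates_def by blast
  qed
  hence "y \<in> gsemo_update P y" unfolding gsemo_update_def by auto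
  moreover have "finite (gsemo_update P y)"
    using valid_pop_gsemo_update[OF P(1) len] unfolding valid_pop_def by blast
  ultimately have "Lval y \<le> Max (Lval ` gsemo_update P y)" by simp
  thus ?thesis using y sP \<open>Lval s < length s\<close> unfolding L_gap_def by auto
qed

lemma front_gap_progress:
  assumes P: "valid_pop n P" and s: "good n P s"
  shows "\<exists>y. hamming_neighbour s y \<and> front_gap n (gsemo_update P y) < front_gap n P"
proof -
  obtain y where y: "hamming_neighbour s y" "y \<in> pareto_set n" "lotz y \<notin> lotz ` P"
    using s unfolding good_def by blast
  have len: "length y = n" using y(2) pareto_set_iff by blast
  have "y \<in> gsemo_update P y"
    using not_dominates_pareto_point[OF _ y(2)] P unfolding valid_pop_def gsemo_update_def by auto
  hence "insert y (P \<inter> pareto_set n) \<subseteq> gsemo_update P y \<inter> pareto_set n"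
    using pareto_points_subset_gsemo_update[OF P len] y(2) by auto
  moreover have "y \<notin> P" using y(3) by blast
  ultimately have "card (P \<inter> pareto_set n) < card (gsemo_update P y \<inter> pareto_set n)"
    using finite_pareto_set card_mono[of "gsemo_update P y \<inter> pareto_set n"]
    by (metis Int_iff card_insert_disjoint finite_Int Suc_le_lessD)
  thus ?thesis using y(1) card_pareto_points_le unfolding front_gap_def
    by (meson diff_less_mono2 le_imp_less_Suc less_le_trans)
qed

lemma maxL_nonempty:
  assumes "valid_pop n P"
  shows "maxL P \<noteq> {}"
proof -
  have "Max (Lval ` P) \<in> Lval ` P"
    using assms unfolding valid_pop_def by (intro Max_in) auto
  thus ?thesis unfolding maxL_def by auto
qed

lemma set_pmf_gsemo_step:
  assumes P: "valid_pop n P" and sel: "set_pmf (sel (maxL P)) \<subseteq> maxL P"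
    and P': "P' \<in> set_pmf (gsemo_step n sel P)"
  shows "\<exists>s'. length s' = n \<and> P' = gsemo_update P s'"
proof -
  obtain s s' where s: "s \<in> set_pmf (sel (maxL P))"
    and s': "s' \<in> set_pmf (flip_bits (1 / real n) s)" and "P' = gsemo_update P s'"
    using P' unfolding gsemo_step_eq by auto
  moreover have "length s = n" using s sel P unfolding maxL_def valid_pop_def by auto
  ultimately show ?thesis using length_flip_bits[OF s'] by auto
qed

lemma valid_pop_pop_dist:
  assumes sel: "\<forall>Q. Q \<noteq> {} \<longrightarrow> set_pmf (sel Q) \<subseteq> Q"
  shows "P \<in> set_pmf (pop_dist n sel t) \<Longrightarrow> valid_pop n P"
proof (induction t arbitrary: P)
  case 0
  have "{xs :: bool list. length xs = n} \<noteq> {}" "finite {xs :: bool list. length xs = n}"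
    using finite_lists_length_eq[of "UNIV :: bool set" n] by (auto intro!: exI[of _ "replicate n True"])
  thus ?case using 0 by (auto simp: valid_pop_def)
next
  case (Suc t)
  then obtain Q where Q: "valid_pop n Q" "P \<in> set_pmf (stopped_step n sel Q)" by auto
  show ?case
  proof (cases "covered n Q")
    case False
    have "set_pmf (sel (maxL Q)) \<subseteq> maxL Q" using sel maxL_nonempty[OF Q(1)] by blast
    then obtain s' where "length s' = n" "P = gsemo_update Q s'"
      using set_pmf_gsemo_step[where sel = sel, OF Q(1)] Q(2) False by (auto simp: stopped_step_def)
    thus ?thesis using valid_pop_gsemo_update[OF Q(1)] by simp
  qed (use Q in \<open>simp add: stopped_step_def\<close>)
qed

lemma emeasure_gsemo_step_ge:
  assumes P: "valid_pop n P" and n: "2 \<le> n"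
    and sel: "set_pmf (sel (maxL P)) \<subseteq> maxL P"
    and q: "0 \<le> q" "ennreal q \<le> emeasure (measure_pmf (sel (maxL P))) S"
    and progress: "\<And>s. s \<in> maxL P \<Longrightarrow> s \<in> S \<Longrightarrow> \<exists>y. hamming_neighbour s y \<and> gsemo_update P y \<in> E"
  shows "ennreal (exp (-2) * q / real n) \<le> emeasure (measure_pmf (gsemo_step n sel P)) E"
proof -
  let ?c = "ennreal (exp (-2) / real n)"
  have "ennreal (exp (-2) * q / real n) = ?c * ennreal q"
    using q(1) by (simp add: ennreal_mult'' [symmetric])
  also have "\<dots> \<le> ?c * emeasure (measure_pmf (sel (maxL P))) S"
    using q(2) by (rule mult_left_mono) simp
  also have "\<dots> = (\<integral>\<^sup>+s. ?c * indicator S s \<partial>sel (maxL P))"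
    by (simp add: nn_integral_cmult_indicator)
  also have "\<dots> \<le> (\<integral>\<^sup>+s. emeasure (measure_pmf (flip_bits (1 / real n) s)) (gsemo_update P -` E)
                      \<partial>sel (maxL P))"
  proof (rule nn_integral_mono_AE, unfold AE_measure_pmf_iff, intro ballI)
    fix s assume "s \<in> set_pmf (sel (maxL P))"
    hence s: "s \<in> maxL P" "length s = n" using sel P unfolding maxL_def valid_pop_def by auto
    show "?c * indicator S s \<le> emeasure (measure_pmf (flip_bits (1 / real n) s)) (gsemo_update P -` E)"
    proof (cases "s \<in> S")
      case True
      then obtain y where y: "hamming_neighbour s y" "gsemo_update P y \<in> E"
        using progress s(1) by blast
      have "?c \<le> emeasure (measure_pmf (flip_bits (1 / real n) s)) {y}"
        using pmf_flip_bits_neighbour_ge[OF n s(2) y(1)] by (simp add: emeasure_pmf_single)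
      also have "\<dots> \<le> emeasure (measure_pmf (flip_bits (1 / real n) s)) (gsemo_update P -` E)"
        using y(2) by (intro emeasure_mono) auto
      finally show ?thesis using True by simp
    qed simp
  qed
  also have "\<dots> = emeasure (measure_pmf (gsemo_step n sel P)) E"
    by (simp add: gsemo_step_eq)
  finally show ?thesis .
qed

definition potential :: "nat \<Rightarrow> real \<Rightarrow> bool list set \<Rightarrow> real" where
  "potential n p P =
     (if covered n P then 0 else exp 2 * real n * (real (L_gap n P) + real (front_gap n P) / p))"

lemma potential_nonneg: "0 < p \<Longrightarrow> 0 \<le> potential n p P"
  unfolding potential_def by simp

lemma potential_le_gaps:
  "0 < p \<Longrightarrow> potential n p P \<le> exp 2 * real n * (real (L_gap n P) + real (front_gap n P) / p)"
  unfolding potential_def by simp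

lemma potential_le:
  assumes "1 \<le> n" "0 < p" "p \<le> 1"
  shows "potential n p P \<le> 3 * exp 2 * real n ^ 2 / p"
proof -
  have "real (L_gap n P) \<le> real n" "real n \<le> real n / p"
    using assms by (auto simp: L_gap_def le_divide_eq)
  moreover have "real (front_gap n P) / p \<le> 2 * real n / p"
    using assms by (intro divide_right_mono) (auto simp: front_gap_def)
  moreover have "3 * real n / p = real n / p + 2 * real n / p"
    by (simp add: add_divide_distrib[symmetric])
  ultimately have "real (L_gap n P) + real (front_gap n P) / p \<le> 3 * real n / p"
    by linarith
  hence "exp 2 * real n * (real (L_gap n P) + real (front_gap n P) / p) \<le> exp 2 * real n * (3 * real n / p)"
    by (rule mult_left_mono) simp
  moreover have "exp 2 * real n * (3 * real n / p) = 3 * exp 2 * real n ^ 2 / p"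
    by (simp add: power2_eq_square)
  ultimately show ?thesis using potential_le_gaps[OF assms(2), of n P] by linarith
qed

lemma potential_step_le:
  assumes p: "0 < p" and P: "\<not> covered n P"
    and L: "real (L_gap n P') + dL \<le> real (L_gap n P)"
    and F: "real (front_gap n P') + dF \<le> real (front_gap n P)"
  shows "potential n p P' + exp 2 * real n * (dL + dF / p) \<le> potential n p P"
proof -
  let ?w = "exp 2 * real n"
  have "(real (L_gap n P') + dL) + (real (front_gap n P') + dF) / p
      \<le> real (L_gap n P) + real (front_gap n P) / p"
    using L F p by (intro add_mono divide_right_mono) auto
  hence "?w * ((real (L_gap n P') + dL) + (real (front_gap n P') + dF) / p) \<le> potential n p P"
    using P unfolding potential_def by (simp add: mult_left_mono)
  moreover have "?w * ((real (L_gap n P') + dL) + (real (front_gap n P') + dF) / p) =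
      ?w * (real (L_gap n P') + real (front_gap n P') / p) + ?w * (dL + dF / p)"
    by (simp add: algebra_simps add_divide_distrib)
  ultimately show ?thesis using potential_le_gaps[OF p, of n P'] by linarith
qed

lemma potential_drift:
  fixes M :: "bool list set pmf"
  assumes p: "0 < p" and n: "1 \<le> n" and P: "\<not> covered n P"
    and mono: "\<And>P'. P' \<in> set_pmf M \<Longrightarrow> L_gap n P' \<le> L_gap n P \<and> front_gap n P' \<le> front_gap n P"
    and progress:
      "ennreal (exp (-2) / real n) \<le> emeasure M {P'. L_gap n P' < L_gap n P} \<or>
       ennreal (exp (-2) * p / real n) \<le> emeasure M {P'. front_gap n P' < front_gap n P}"
  shows "1 + (\<integral>\<^sup>+P'. ennreal (potential n p P') \<partial>M) \<le> ennreal (potential n p P)"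
proof -
  let ?w = "exp 2 * real n"
  let ?EL = "{P'. L_gap n P' < L_gap n P}" and ?EF = "{P'. front_gap n P' < front_gap n P}"
  have w: "0 < ?w" using n by simp
  from progress show ?thesis
  proof
    assume "ennreal (exp (-2) / real n) \<le> emeasure M ?EL"
    moreover have "potential n p P' + ?w * indicator ?EL P' \<le> potential n p P" if "P' \<in> set_pmf M" for P'
      using potential_step_le[OF p P, of P' "indicator ?EL P'" 0] mono[OF that]
        of_nat_add_indicator_le[of "L_gap n" P' "L_gap n P"]
      by simp
    ultimately show ?thesis
      using w p by (intro nn_integral_drift_le[where g = ?w]) (auto simp: potential_nonneg exp_minus field_simps)
  next
    assume "ennreal (exp (-2) * p / real n) \<le> emeasure M ?EF"
    moreover have "potential n p P' + ?w / p * indicator ?EF P' \<le> potential n p P" if "P' \<in> set_pmf M" for P'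
      using potential_step_le[OF p P, of P' 0 "indicator ?EF P'"] mono[OF that]
        of_nat_add_indicator_le[of "front_gap n" P' "front_gap n P"]
      by simp
    ultimately show ?thesis
      using w p by (intro nn_integral_drift_le[where g = "?w / p"]) (auto simp: potential_nonneg exp_minus field_simps)
  qed
qed

lemma stopped_step_drift:
  assumes n: "2 \<le> n" and p: "0 < p" and P: "valid_pop n P"
    and sel: "set_pmf (sel (maxL P)) \<subseteq> maxL P"
    and good: "P \<inter> pareto_set n \<noteq> {} \<Longrightarrow> \<not> covered n P \<Longrightarrow>
                 p \<le> measure_pmf.prob (sel (maxL P)) {x. good n P x}"
  shows "indicator {P. \<not> covered n P} P + (\<integral>\<^sup>+P'. ennreal (potential n p P') \<partial>stopped_step n sel P)
           \<le> ennreal (potential n p P)"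
proof (cases "covered n P")
  case False
  have "ennreal (exp (-2) / real n) \<le> emeasure (gsemo_step n sel P) {P'. L_gap n P' < L_gap n P} \<or>
        ennreal (exp (-2) * p / real n) \<le> emeasure (gsemo_step n sel P) {P'. front_gap n P' < front_gap n P}"
  proof (cases "P \<inter> pareto_set n = {}")
    case True
    have "ennreal (exp (-2) / real n) \<le> emeasure (gsemo_step n sel P) {P'. L_gap n P' < L_gap n P}"
      using emeasure_gsemo_step_ge[where sel = sel and S = UNIV and q = 1, OF P n sel] L_gap_progress[OF P True]
      by simp
    thus ?thesis ..
  next
    case nonempty: False
    have "ennreal (exp (-2) * p / real n) \<le> emeasure (gsemo_step n sel P) {P'. front_gap n P' < front_gap n P}"
      using front_gap_progress[OF P] good[OF nonempty False] p
      by (intro emeasure_gsemo_step_ge[where sel = sel and S = "{x. good n P x}", OF P n sel])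
        (auto simp: measure_pmf.emeasure_eq_measure)
    thus ?thesis ..
  qed
  hence "1 + (\<integral>\<^sup>+P'. ennreal (potential n p P') \<partial>gsemo_step n sel P) \<le> ennreal (potential n p P)"
    using set_pmf_gsemo_step[where sel = sel, OF P sel] gaps_gsemo_update_le[OF P] p n False
    by (intro potential_drift) fastforce+
  thus ?thesis using False by (simp add: stopped_step_def)
qed (simp add: stopped_step_def nn_integral_return)

theorem lemma8:
  shows "\<exists>C N. \<forall>n \<ge> N. \<forall>(p::real) (sel :: bool list set \<Rightarrow> bool list pmf).
     0 < p \<and> p \<le> 1 \<and>
     (\<forall>Q. Q \<noteq> {} \<longrightarrow> set_pmf (sel Q) \<subseteq> Q) \<and>
     (\<forall>P. valid_pop n P \<and> P \<inter> pareto_set n \<noteq> {} \<and> \<not> covered n P \<longrightarrow>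
          measure_pmf.prob (sel (maxL P)) {x. good n P x} \<ge> p)
     \<longrightarrow> expected_time n sel \<le> ennreal (C * real n ^ 2 / p)"
proof (intro exI[of _ "3 * exp 2"] exI[of _ 2] allI impI, elim conjE)
  fix n :: nat and p :: real and sel :: "bool list set \<Rightarrow> bool list pmf"
  assume n: "2 \<le> n" and p: "0 < p" "p \<le> 1" and sel: "\<forall>Q. Q \<noteq> {} \<longrightarrow> set_pmf (sel Q) \<subseteq> Q"
    and good: "\<forall>P. valid_pop n P \<and> P \<inter> pareto_set n \<noteq> {} \<and> \<not> covered n P \<longrightarrow>
                  measure_pmf.prob (sel (maxL P)) {x. good n P x} \<ge> p"
  have "expected_time n sel = (\<Sum>t. emeasure (pop_dist n sel t) {P. \<not> covered n P})"
    by (simp add: expected_time_def measure_pmf.emeasure_eq_measure)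
  also have "\<dots> \<le> (\<integral>\<^sup>+P. ennreal (potential n p P) \<partial>pop_dist n sel 0)"
  proof (rule suminf_emeasure_le_potential)
    fix t P assume "P \<in> set_pmf (pop_dist n sel t)"
    hence P: "valid_pop n P" by (rule valid_pop_pop_dist[OF sel])
    show "indicator {P. \<not> covered n P} P + (\<integral>\<^sup>+P'. ennreal (potential n p P') \<partial>stopped_step n sel P)
           \<le> ennreal (potential n p P)"
      using n p(1) P sel maxL_nonempty[OF P] good by (intro stopped_step_drift) auto
  qed simp
  also have "\<dots> \<le> (\<integral>\<^sup>+P. ennreal (3 * exp 2 * real n ^ 2 / p) \<partial>pop_dist n sel 0)"
    using n p by (intro nn_integral_mono ennreal_leI potential_le) auto
  finally show "expected_time n sel \<le> ennreal (3 * exp 2 * real n ^ 2 / p)"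
    by simp
qed

end
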